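(* The At-least-1 objective is UB-proof against a manipulator $m^-$ (one who can only remove edges) over both directed and undirected networks. That is, for every $k$, every (directed or undirected) social network $G$, every agent $m$ and every manipulation in which $m$ removes some of his edges (yielding $G^m$), we have \[\max_{P\in O(G^m)} u(m,P)\le\max_{P\in O(G)} u(m,P),\] where $O(\cdot)$ is the set of At-least-1 solutions, $u(m,P)$ is computed in the true network $G$, and the maximum over an empty solution set is taken to be $0$.
   Context: Let $A=\{a_1,\dots,a_n\}$ be a finite nonempty set of agents and $G=\langle A,E\rangle$ a directed or undirected graph without self-loops (the social network); $N(a)$ is the set of (out-)neighbours of $a$. For a coalition $C\subseteq A$ with $a\in C$, $u(a,C)=|C\cap N(a)|$. For $0<k\le n$, $\Pi_k$ is the set of partitions of $A$ into exactly $k$ nonempty coalitions; for $P\in\Pi_k$, $u(a,P)=u(a,C)$ where $C\in P$ contains $a$. The At-least-1 objective: $O(G)$ is the set of all $P\in\Pi_k$ such that every agent has utility at least $1$ (utilities computed in the network in question); if none exists, $O(G)=\emptyset$ and all agents are considered to have utility $0$. A manipulator $m$ of type $m^-$ may remove edges: in a directed network only outgoing edges $(m,a)\in E$; in an undirected network any edges incident to $m$. The reported network is $G^m$. The utility $u(m,P)$ of the manipulator is always computed with respect to his true neighbours in the original $G$. *)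

theory Defs
  imports Main
begin

text \<open>An undirected network: additionally E is symmetric (an undirected edge {a,b} is
  represented by both (a,b) and (b,a)).\<close>

definition network :: "'a set \<Rightarrow> ('a \<times> 'a) set \<Rightarrow> bool" where
  "network A E \<longleftrightarrow> E \<subseteq> A \<times> A \<and> (\<forall>a. (a, a) \<notin> E)"

definition undirected_network :: "'a set \<Rightarrow> ('a \<times> 'a) set \<Rightarrow> bool" where
  "undirected_network A E \<longleftrightarrow> network A E \<and> sym E"

definition nbrs :: "('a \<times> 'a) set \<Rightarrow> 'a \<Rightarrow> 'a set" where
  "nbrs E a = {b. (a, b) \<in> E}"

definition util_coal :: "('a \<times> 'a) set \<Rightarrow> 'a \<Rightarrow> 'a set \<Rightarrow> nat" where
  "util_coal E a C = card (C \<inter> nbrs E a)"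

definition partitions_k :: "'a set \<Rightarrow> nat \<Rightarrow> 'a set set set" where
  "partitions_k A k = {P. \<Union>P = A \<and> {} \<notin> P \<and>
      (\<forall>C\<in>P. \<forall>D\<in>P. C \<noteq> D \<longrightarrow> C \<inter> D = {}) \<and> finite P \<and> card P = k}"

definition util :: "('a \<times> 'a) set \<Rightarrow> 'a \<Rightarrow> 'a set set \<Rightarrow> nat" where
  "util E a P = util_coal E a (THE C. C \<in> P \<and> a \<in> C)"

definition at_least_1 :: "'a set \<Rightarrow> ('a \<times> 'a) set \<Rightarrow> nat \<Rightarrow> 'a set set set" where
  "at_least_1 A E k = {P \<in> partitions_k A k. \<forall>a\<in>A. util E a P \<ge> 1}"

definition best_util :: "('a \<times> 'a) set \<Rightarrow> 'a \<Rightarrow> 'a set set set \<Rightarrow> nat" where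
  "best_util Etrue m Sol = (if Sol = {} then 0 else Max (util Etrue m ` Sol))"

definition removal_directed :: "('a \<times> 'a) set \<Rightarrow> 'a \<Rightarrow> ('a \<times> 'a) set \<Rightarrow> bool" where
  "removal_directed E m E' \<longleftrightarrow> E' \<subseteq> E \<and> (\<forall>(x, y)\<in>E - E'. x = m)"

definition removal_undirected :: "('a \<times> 'a) set \<Rightarrow> 'a \<Rightarrow> ('a \<times> 'a) set \<Rightarrow> bool" where
  "removal_undirected E m E' \<longleftrightarrow> E' \<subseteq> E \<and> sym E' \<and> (\<forall>(x, y)\<in>E - E'. x = m \<or> y = m)"

end

theory Submission
  imports Defs
begin

text \<open>Removing edges can only lower utilities computed in the reported network, so every
  At-least-1 partition of the reported network is already one of the true network. The
  manipulator's best true utility is thus a maximum over a smaller set of partitions.\<close>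

lemma nbrs_mono: "E' \<subseteq> E \<Longrightarrow> nbrs E' a \<subseteq> nbrs E a"
  unfolding nbrs_def by blast

lemma finite_nbrs: "finite E \<Longrightarrow> finite (nbrs E a)"
proof -
  assume "finite E"
  then have "finite (snd ` E)" by simp
  moreover have "nbrs E a \<subseteq> snd ` E" unfolding nbrs_def by force
  ultimately show ?thesis by (rule finite_subset[rotated])
qed

lemma util_coal_mono:
  assumes "finite E" and "E' \<subseteq> E"
  shows "util_coal E' a C \<le> util_coal E a C"
  unfolding util_coal_def
  using assms by (intro card_mono) (auto dest: nbrs_mono intro: finite_nbrs)

lemma util_mono:
  assumes "finite E" and "E' \<subseteq> E"
  shows "util E' a P \<le> util E a P"
  unfolding util_def using assms by (rule util_coal_mono)

lemma at_least_1_mono: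
  assumes "finite E" and "E' \<subseteq> E"
  shows "at_least_1 A E' k \<subseteq> at_least_1 A E k"
  unfolding at_least_1_def using util_mono[OF assms] order_trans by blast

lemma finite_at_least_1:
  assumes "finite A"
  shows "finite (at_least_1 A E k)"
proof -
  have "at_least_1 A E k \<subseteq> Pow (Pow A)"
    unfolding at_least_1_def partitions_k_def by blast
  then show ?thesis using assms by (simp add: finite_subset)
qed

lemma best_util_mono:
  assumes "S \<subseteq> T" and "finite T"
  shows "best_util E m S \<le> best_util E m T"
proof (cases "S = {}")
  case True
  then show ?thesis by (simp add: best_util_def)
next
  case False
  with assms(1) have "T \<noteq> {}" by blast
  have "Max (util E m ` S) \<le> Max (util E m ` T)"
    using False assms by (intro Max_mono) auto
  with False \<open>T \<noteq> {}\<close> show ?thesis by (simp add: best_util_def)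
qed

lemma best_util_at_least_1_edge_removal:
  assumes "finite A" and "E \<subseteq> A \<times> A" and "E' \<subseteq> E"
  shows "best_util E m (at_least_1 A E' k) \<le> best_util E m (at_least_1 A E k)"
proof -
  from assms(1,2) have "finite E" by (meson finite_SigmaI finite_subset)
  then show ?thesis
    using assms by (intro best_util_mono at_least_1_mono finite_at_least_1)
qed

theorem theorem4:
  fixes A :: "'a set" and E Em :: "('a \<times> 'a) set" and m :: 'a and k :: nat
  assumes "finite A" and "A \<noteq> {}" and "0 < k" and "k \<le> card A" and "m \<in> A"
  shows "(network A E \<and> removal_directed E m Em
            \<longrightarrow> best_util E m (at_least_1 A Em k) \<le> best_util E m (at_least_1 A E k))
       \<and> (undirected_network A E \<and> removal_undirected E m Em
            \<longrightarrow> best_util E m (at_least_1 A Em k) \<le> best_util E m (at_least_1 A E k))"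
  using best_util_at_least_1_edge_removal[OF \<open>finite A\<close>]
  unfolding undirected_network_def network_def removal_directed_def removal_undirected_def
  by blast

end
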